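(* Let $X\in\mathcal{S}_{n,p}$ and suppose $f$ satisfies the Riemannian Łojasiewicz gradient inequality at $X$ with exponent $\theta\in(0,\frac12]$ and constant $C>0$, i.e. there is a neighborhood $U\subset\mathcal{S}_{n,p}$ of $X$ such that $\|\mathrm{grad} f(Y)\|_F\ge C|f(Y)-f(X)|^{1-\theta}$ for all $Y\in U$. If $\beta>\max\{8CM_1,1,\bar\beta\}$, then $h$ satisfies the Euclidean Łojasiewicz gradient inequality at $X$ with the same exponent $\theta$, i.e. there exist a neighborhood $U'\subset\mathbb{R}^{n\times p}$ of $X$ and a constant $C'>0$ such that $\|\nabla h(Y)\|_F\ge C'|h(Y)-h(X)|^{1-\theta}$ for all $Y\in U'$.
   Context: $f:\mathbb{R}^{n\times p}\to\mathbb{R}$ ($n\ge p$) is differentiable with $f,\nabla f$ locally Lipschitz. $\Phi(M):=\frac12(M+M^\top)$; $\mathcal{S}_{n,p}=\{Y:Y^\top Y=I_p\}$; for $Y\in\mathcal{S}_{n,p}$, $\mathrm{grad} f(Y):=\nabla f(Y)-Y\Phi(Y^\top\nabla f(Y))$. $\mathcal{A}(X):=\frac32I_p-\frac12X^\top X$, $g(X):=f(X\mathcal{A}(X))$, $h(X):=g(X)+\frac\beta4\|X^\top X-I_p\|_F^2$, $G(X):=\nabla f(Y)|_{Y=X\mathcal{A}(X)}$. $\Omega:=\{X:\|X\|_2\le1+\frac1{12}\}$; $M_1:=\sup_{X\in\Omega}\|G(X)\|_F$; $M_2:=\sup_{X\ne Y\in\Omega}\frac{\|\nabla g(X)-\nabla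 g(Y)\|_F}{\|X-Y\|_F}$; $\bar\beta:=\max\{12M_1,6M_2\}$. *)

theory Defs
  imports "HOL-Analysis.Analysis"
begin

text \<open>Matrices in R^{n x p} are represented as real^'p^'n (rows indexed by 'n).
 The inner product of this type is the Frobenius inner product and norm is the
 Frobenius norm.\<close>

type_synonym ('n,'p) mat = "real^'p^'n"

definition egrad :: "(real^'p^'n \<Rightarrow> real) \<Rightarrow> real^'p^'n \<Rightarrow> real^'p^'n" where
  "egrad F Y = (THE G. (F has_derivative (\<lambda>H. G \<bullet> H)) (at Y))"

definition locally_lipschitz :: "('a::metric_space \<Rightarrow> 'b::metric_space) \<Rightarrow> bool" where
  "locally_lipschitz F \<longleftrightarrow> (\<forall>x. \<exists>e>0. \<exists>L. \<forall>y\<in>ball x e. \<forall>z\<in>ball x e. dist (F y) (F z) \<le> L * dist y z)"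

definition symm_part :: "real^'p^'p \<Rightarrow> real^'p^'p" where
  "symm_part M = (1/2) *\<^sub>R (M + transpose M)"

definition stiefel :: "(real^'p^'n) set" where
  "stiefel = {Y. transpose Y ** Y = mat 1}"

definition rgrad :: "(real^'p^'n \<Rightarrow> real) \<Rightarrow> real^'p^'n \<Rightarrow> real^'p^'n" where
  "rgrad F Y = egrad F Y - Y ** symm_part (transpose Y ** egrad F Y)"

definition Acal :: "real^'p^'n \<Rightarrow> real^'p^'p" where
  "Acal X = (3/2) *\<^sub>R mat 1 - (1/2) *\<^sub>R (transpose X ** X)"

definition gfun :: "(real^'p^'n \<Rightarrow> real) \<Rightarrow> real^'p^'n \<Rightarrow> real" where
  "gfun F X = F (X ** Acal X)"

definition hfun :: "(real^'p^'n \<Rightarrow> real) \<Rightarrow> real \<Rightarrow> real^'p^'n \<Rightarrow> real" where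
  "hfun F \<beta> X = gfun F X + \<beta> / 4 * (norm (transpose X ** X - mat 1))\<^sup>2"

definition Gfun :: "(real^'p^'n \<Rightarrow> real) \<Rightarrow> real^'p^'n \<Rightarrow> real^'p^'n" where
  "Gfun F X = egrad F (X ** Acal X)"

definition Omega :: "(real^'p^'n) set" where
  "Omega = {X. onorm (\<lambda>v. X *v v) \<le> 1 + 1/12}"

definition M1 :: "(real^'p^'n \<Rightarrow> real) \<Rightarrow> real" where
  "M1 F = (SUP X\<in>(Omega :: (real^'p^'n) set). norm (Gfun F X))"

definition M2 :: "(real^'p^'n \<Rightarrow> real) \<Rightarrow> real" where
  "M2 F = Sup {norm (egrad (gfun F) X - egrad (gfun F) Y) / norm (X - Y) | X Y.
                X \<in> (Omega :: (real^'p^'n) set) \<and> Y \<in> Omega \<and> X \<noteq> Y}"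

definition beta_bar :: "(real^'p^'n \<Rightarrow> real) \<Rightarrow> real" where
  "beta_bar F = max (12 * M1 F) (6 * M2 F)"

end

theory Submission
  imports Defs
begin

(* Write e = |Y^T Y - I| for the infeasibility of Y near X.  Pairing the gradient of h at Y
   with the normal direction Y (Y^T Y - I), the penalty term dominates because beta > 12 M1,
   which gives e <= 4 |grad h(Y)|.  The Newton-Schulz iteration Y -> Y A(Y) converges
   quadratically to a point Z of the Stiefel manifold with |Y - Z| = O(e) and
   |Y A(Y) - Z| = O(e^2); pairing the gradient of h at Y with the Riemannian gradient at Z
   shows |grad f(Z)| <= |grad h(Y)| + O(e).  Finally h(Y) - h(X) = f(Z) - f(X) + O(e^2), and
   since t -> t^(1-theta) is subadditive and (e^2)^(1-theta) <= e, the Riemannian inequality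
   at Z bounds |h(Y) - h(X)|^(1-theta) by a multiple of |grad h(Y)|. *)

section \<open>Frobenius geometry of matrices\<close>

lemma inner_matrix: "(A::real^'p^'n) \<bullet> B = (\<Sum>i\<in>UNIV. \<Sum>j\<in>UNIV. A$i$j * B$i$j)"
  by (simp add: inner_vec_def)

lemma norm_matrix_sq: "(norm (A::real^'p^'n))\<^sup>2 = (\<Sum>i\<in>UNIV. \<Sum>j\<in>UNIV. (A$i$j)\<^sup>2)"
  unfolding power2_norm_eq_inner inner_matrix by (simp add: power2_eq_square)

lemma norm_matrix_sq_rows: "(norm (A::real^'p^'n))\<^sup>2 = (\<Sum>i\<in>UNIV. (norm (A$i))\<^sup>2)"
  by (simp add: power2_norm_eq_inner inner_vec_def)

lemma matrix_mult_component:
  "((A::real^'m^'n) ** (B::real^'p^'m))$i$j = (\<Sum>k\<in>UNIV. A$i$k * B$k$j)"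
  by (simp add: matrix_matrix_mult_def)

lemma transpose_component [simp]: "transpose A $ i $ j = A $ j $ i"
  by (simp add: transpose_def)

lemma inner_transpose: "transpose (A::real^'p^'n) \<bullet> transpose B = A \<bullet> B"
  unfolding inner_matrix transpose_component by (rule sum.swap)

lemma norm_transpose: "norm (transpose (A::real^'p^'n)) = norm A"
  by (metis inner_transpose norm_eq_sqrt_inner)

lemma inner_matrix_mult_left:
  "((A::real^'m^'n) ** (B::real^'p^'m)) \<bullet> C = B \<bullet> (transpose A ** C)"
proof -
  have "(A ** B) \<bullet> C = (\<Sum>i\<in>UNIV. \<Sum>j\<in>UNIV. \<Sum>k\<in>UNIV. A$i$k * B$k$j * C$i$j)"
    by (simp add: inner_matrix matrix_mult_component sum_distrib_right)
  also have "\<dots> = (\<Sum>i\<in>UNIV. \<Sum>k\<in>UNIV. \<Sum>j\<in>UNIV. A$i$k * B$k$j * C$i$j)"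
    by (intro sum.cong refl sum.swap)
  also have "\<dots> = (\<Sum>k\<in>UNIV. \<Sum>i\<in>UNIV. \<Sum>j\<in>UNIV. A$i$k * B$k$j * C$i$j)"
    by (rule sum.swap)
  also have "\<dots> = (\<Sum>k\<in>UNIV. \<Sum>j\<in>UNIV. \<Sum>i\<in>UNIV. A$i$k * B$k$j * C$i$j)"
    by (intro sum.cong refl sum.swap)
  also have "\<dots> = B \<bullet> (transpose A ** C)"
    by (simp add: inner_matrix matrix_mult_component sum_distrib_left mult_ac)
  finally show ?thesis .
qed

lemma norm_matrix_mult_le: "norm ((A::real^'m^'n) ** (B::real^'p^'m)) \<le> norm A * norm B"
proof -
  have entry: "((A ** B)$i$j)\<^sup>2 \<le> (norm (A$i))\<^sup>2 * (norm (column j B))\<^sup>2" for i j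
  proof -
    have "(A ** B)$i$j = A$i \<bullet> column j B"
      by (simp add: matrix_mult_component inner_vec_def column_def)
    then show ?thesis
      using Cauchy_Schwarz_ineq[of "A$i" "column j B"] by (simp add: power2_norm_eq_inner)
  qed
  have "(norm (A ** B))\<^sup>2 \<le> (\<Sum>i\<in>UNIV. \<Sum>j\<in>UNIV. (norm (A$i))\<^sup>2 * (norm (column j B))\<^sup>2)"
    unfolding norm_matrix_sq by (intro sum_mono entry)
  also have "\<dots> = (\<Sum>i\<in>UNIV. (norm (A$i))\<^sup>2) * (\<Sum>j\<in>UNIV. (norm (column j B))\<^sup>2)"
    by (simp add: sum_product)
  also have "(\<Sum>j\<in>UNIV. (norm (column j B))\<^sup>2) = (norm (transpose B))\<^sup>2"
    by (simp add: norm_matrix_sq_rows transpose_def column_def)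
  also have "(\<Sum>i\<in>UNIV. (norm (A$i))\<^sup>2) = (norm A)\<^sup>2"
    by (rule norm_matrix_sq_rows[symmetric])
  finally have "(norm (A ** B))\<^sup>2 \<le> (norm A * norm B)\<^sup>2"
    by (simp add: norm_transpose power_mult_distrib)
  then show ?thesis by (rule power2_le_imp_le) simp
qed

lemma norm_matrix_mult3_le:
  "norm ((A::real^'a^'b) ** (B::real^'c^'a) ** (C::real^'d^'c)) \<le> norm A * norm B * norm C"
  by (meson norm_matrix_mult_le mult_right_mono norm_ge_zero order_trans)

lemma bounded_bilinear_matrix_mult:
  "bounded_bilinear (\<lambda>(A::real^'m^'n) (B::real^'p^'m). A ** B)"
proof
  fix a a' :: "real^'m^'n" and b b' :: "real^'p^'m" and r :: real
  show "(a + a') ** b = a ** b + a' ** b"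
    by (simp add: matrix_matrix_mult_def vec_eq_iff sum.distrib algebra_simps)
  show "a ** (b + b') = a ** b + a ** b'" by (simp add: matrix_add_ldistrib)
  show "(r *\<^sub>R a) ** b = r *\<^sub>R (a ** b)" by (simp add: scalar_matrix_assoc)
  show "a ** (r *\<^sub>R b) = r *\<^sub>R (a ** b)" by (simp add: matrix_scalar_ac scalar_matrix_assoc)
  show "\<exists>K. \<forall>a b. norm (a ** b) \<le> norm (a::real^'m^'n) * norm (b::real^'p^'m) * K"
    by (rule exI[of _ 1]) (simp add: norm_matrix_mult_le)
qed

lemma bounded_linear_transpose: "bounded_linear (transpose :: real^'p^'n \<Rightarrow> real^'n^'p)"
proof
  fix x y :: "real^'p^'n" and r :: real
  show "transpose (x + y) = transpose x + transpose y" by (simp add: vec_eq_iff)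
  show "transpose (r *\<^sub>R x) = r *\<^sub>R transpose x" by (simp add: transpose_scalar)
  show "\<exists>K. \<forall>x. norm (transpose (x::real^'p^'n)) \<le> norm x * K"
    by (rule exI[of _ 1]) (simp add: norm_transpose)
qed

lemma matrix_mult_add_left: "((A::real^'m^'n) + B) ** (C::real^'p^'m) = A ** C + B ** C"
  by (simp add: matrix_matrix_mult_def vec_eq_iff sum.distrib algebra_simps)

lemma matrix_mult_scaleR_left: "(c *\<^sub>R (A::real^'m^'n)) ** (B::real^'p^'m) = c *\<^sub>R (A ** B)"
  by (simp add: scalar_matrix_assoc)

lemma matrix_mult_scaleR_right: "(A::real^'m^'n) ** (c *\<^sub>R (B::real^'p^'m)) = c *\<^sub>R (A ** B)"
  by (simp add: matrix_scalar_ac scalar_matrix_assoc)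

lemma matrix_mult_minus_left: "(- (A::real^'m^'n)) ** (B::real^'p^'m) = - (A ** B)"
  using matrix_mult_scaleR_left[of "-1" A B] by simp

lemma matrix_mult_minus_right: "(A::real^'m^'n) ** (- (B::real^'p^'m)) = - (A ** B)"
  using matrix_mult_scaleR_right[of A "-1" B] by simp

lemma matrix_mult_diff_left: "((A::real^'m^'n) - B) ** (C::real^'p^'m) = A ** C - B ** C"
  using matrix_mult_add_left[of A "-B" C] by (simp add: matrix_mult_minus_left)

lemma matrix_mult_diff_right: "(A::real^'m^'n) ** ((B::real^'p^'m) - C) = A ** B - A ** C"
  using matrix_add_ldistrib[of A B "-C"] by (simp add: matrix_mult_minus_right)

lemma transpose_add: "transpose ((A::real^'p^'n) + B) = transpose A + transpose B"
  by (simp add: vec_eq_iff)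

lemma transpose_diff: "transpose ((A::real^'p^'n) - B) = transpose A - transpose B"
  by (simp add: vec_eq_iff)

lemma transpose_minus: "transpose (- (A::real^'p^'n)) = - transpose A"
  by (simp add: vec_eq_iff)

lemmas matrix_mult_simps =
  matrix_mult_add_left matrix_add_ldistrib matrix_mult_scaleR_left matrix_mult_scaleR_right
  matrix_mult_minus_left matrix_mult_minus_right matrix_mult_diff_left matrix_mult_diff_right
  transpose_add transpose_diff transpose_minus transpose_scalar matrix_transpose_mul
  matrix_mul_assoc

lemma norm_gram_deriv_le:
  "norm (transpose (Y::real^'p^'n) ** H + transpose H ** Y) \<le> 2 * norm Y * norm H"
proof -
  have "norm (transpose Y ** H) \<le> norm Y * norm H" "norm (transpose H ** Y) \<le> norm Y * norm H"
    using norm_matrix_mult_le[of "transpose Y" H] norm_matrix_mult_le[of "transpose H" Y]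
    by (simp_all add: norm_transpose mult.commute)
  then show ?thesis using norm_triangle_ineq[of "transpose Y ** H" "transpose H ** Y"] by linarith
qed

section \<open>Euclidean gradients\<close>

lemma egrad_eqI:
  assumes "(F has_derivative (\<lambda>H. G \<bullet> H)) (at Y)"
  shows "egrad F Y = G"
  unfolding egrad_def
proof (rule the_equality)
  show "(F has_derivative (\<lambda>H. G \<bullet> H)) (at Y)" by fact
  fix G' assume "(F has_derivative (\<lambda>H. G' \<bullet> H)) (at Y)"
  from has_derivative_unique[OF assms this] have "\<And>H. G \<bullet> H = G' \<bullet> H" by metis
  from this[of "G - G'"] have "(G - G') \<bullet> (G - G') = 0" by (simp add: inner_diff_left)
  then show "G' = G" by simp
qed

lemma
  fixes F :: "real^'p^'n \<Rightarrow> real"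
  assumes "(F has_derivative D) (at Y)"
  shows has_derivative_egrad: "(F has_derivative (\<lambda>H. egrad F Y \<bullet> H)) (at Y)"
    and inner_egrad_eq_derivative: "egrad F Y \<bullet> H = D H"
proof -
  define G where "G = (\<Sum>b\<in>Basis. D b *\<^sub>R b)"
  have lin: "linear D" using assms by (rule has_derivative_linear)
  have D_eq: "D H = G \<bullet> H" for H
  proof -
    have "D H = D (\<Sum>b\<in>Basis. (H \<bullet> b) *\<^sub>R b)" by (simp add: euclidean_representation)
    also have "\<dots> = (\<Sum>b\<in>Basis. (H \<bullet> b) * D b)"
      by (simp add: linear_sum[OF lin] linear_scale[OF lin])
    also have "\<dots> = G \<bullet> H" unfolding G_def inner_sum_left
      by (intro sum.cong refl) (simp add: inner_commute)
    finally show ?thesis .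
  qed
  have "(F has_derivative (\<lambda>H. G \<bullet> H)) (at Y)"
    using assms by (rule has_derivative_eq_rhs) (simp add: fun_eq_iff D_eq)
  with egrad_eqI show "(F has_derivative (\<lambda>H. egrad F Y \<bullet> H)) (at Y)" "egrad F Y \<bullet> H = D H"
    by (auto simp: D_eq)
qed

section \<open>The Newton-Schulz map\<close>

definition stiefel_defect :: "real^'p^'n \<Rightarrow> real^'p^'p" where
  "stiefel_defect Y = transpose Y ** Y - mat 1"

(* One Newton-Schulz step towards the polar factor of Y; g = f \<circ> newton_schulz. *)
definition newton_schulz :: "real^'p^'n \<Rightarrow> real^'p^'n" where
  "newton_schulz Y = Y ** Acal Y"

definition newton_schulz_deriv :: "real^'p^'n \<Rightarrow> real^'p^'n \<Rightarrow> real^'p^'n" where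
  "newton_schulz_deriv Y H = H ** Acal Y - (1/2) *\<^sub>R (Y ** (transpose H ** Y + transpose Y ** H))"

lemma gram_eq_defect: "transpose Y ** Y = stiefel_defect Y + mat 1"
  by (simp add: stiefel_defect_def)

lemma Acal_eq_defect: "Acal Y = mat 1 - (1/2) *\<^sub>R stiefel_defect Y"
  by (simp add: Acal_def stiefel_defect_def algebra_simps vec_eq_iff mat_def)

lemma transpose_stiefel_defect: "transpose (stiefel_defect Y) = stiefel_defect Y"
  by (simp add: stiefel_defect_def matrix_mult_simps)

lemma stiefel_iff_defect: "Y \<in> stiefel \<longleftrightarrow> stiefel_defect Y = 0"
  by (simp add: stiefel_def stiefel_defect_def)

lemma newton_schulz_stiefel: "Y \<in> stiefel \<Longrightarrow> newton_schulz Y = Y"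
  by (simp add: newton_schulz_def Acal_eq_defect stiefel_iff_defect)

lemma hfun_eq: "hfun f \<beta> Y = f (newton_schulz Y) + \<beta> / 4 * (norm (stiefel_defect Y))\<^sup>2"
  by (simp add: hfun_def gfun_def newton_schulz_def stiefel_defect_def)

lemma has_derivative_gram:
  "((\<lambda>Y::real^'p^'n. transpose Y ** Y) has_derivative (\<lambda>H. transpose Y ** H + transpose H ** Y)) (at Y)"
  using bounded_bilinear.FDERIV[OF bounded_bilinear_matrix_mult
      bounded_linear_imp_has_derivative[OF bounded_linear_transpose] has_derivative_ident]
  by fast

lemma has_derivative_stiefel_defect:
  "(stiefel_defect has_derivative (\<lambda>H. transpose Y ** H + transpose H ** Y)) (at Y)"
  unfolding stiefel_defect_def[abs_def]
  using has_derivative_diff[OF has_derivative_gram has_derivative_const] by simp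

lemma continuous_stiefel_defect: "isCont stiefel_defect Y"
  using has_derivative_stiefel_defect by (rule has_derivative_continuous)

lemma has_derivative_newton_schulz:
  "(newton_schulz has_derivative newton_schulz_deriv Y) (at Y)"
proof -
  have "(Acal has_derivative (\<lambda>H. - (1/2) *\<^sub>R (transpose Y ** H + transpose H ** Y))) (at Y)"
    unfolding Acal_eq_defect[abs_def]
    using has_derivative_diff[OF has_derivative_const
        has_derivative_scaleR_right[OF has_derivative_stiefel_defect]]
    by simp
  from bounded_bilinear.FDERIV[OF bounded_bilinear_matrix_mult has_derivative_ident this]
  show ?thesis unfolding newton_schulz_def[abs_def]
    by (rule has_derivative_eq_rhs) (simp add: fun_eq_iff newton_schulz_deriv_def matrix_mult_simps algebra_simps)
qed

lemma continuous_newton_schulz: "isCont newton_schulz Y"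
  using has_derivative_newton_schulz by (rule has_derivative_continuous)

lemma has_derivative_hfun:
  assumes "\<forall>Z. f differentiable (at Z)"
  shows "(hfun f \<beta> has_derivative (\<lambda>H. egrad f (newton_schulz Y) \<bullet> newton_schulz_deriv Y H
      + \<beta> / 2 * (stiefel_defect Y \<bullet> (transpose Y ** H + transpose H ** Y)))) (at Y)"
proof -
  have f: "(f has_derivative (\<lambda>H. egrad f Z \<bullet> H)) (at Z)" for Z
    using assms has_derivative_egrad unfolding differentiable_def by blast
  have "((\<lambda>Y. \<beta> / 4 * (stiefel_defect Y \<bullet> stiefel_defect Y)) has_derivative
      (\<lambda>H. \<beta> / 4 * (stiefel_defect Y \<bullet> (transpose Y ** H + transpose H ** Y)
        + (transpose Y ** H + transpose H ** Y) \<bullet> stiefel_defect Y))) (at Y)"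
    by (intro has_derivative_mult_right has_derivative_inner has_derivative_stiefel_defect)
  then have pen: "((\<lambda>Y. \<beta> / 4 * (stiefel_defect Y \<bullet> stiefel_defect Y)) has_derivative
      (\<lambda>H. \<beta> / 2 * (stiefel_defect Y \<bullet> (transpose Y ** H + transpose H ** Y)))) (at Y)"
    by (rule has_derivative_eq_rhs) (simp add: fun_eq_iff inner_commute)
  show ?thesis unfolding hfun_eq[abs_def] power2_norm_eq_inner
    by (intro has_derivative_add pen has_derivative_compose[OF has_derivative_newton_schulz f])
qed

lemma inner_egrad_hfun:
  assumes "\<forall>Z. f differentiable (at Z)"
  shows "egrad (hfun f \<beta>) Y \<bullet> H = egrad f (newton_schulz Y) \<bullet> newton_schulz_deriv Y H
      + \<beta> / 2 * (stiefel_defect Y \<bullet> (transpose Y ** H + transpose H ** Y))"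
  by (rule inner_egrad_eq_derivative[OF has_derivative_hfun[OF assms]])

lemma newton_schulz_deriv_normal:
  "newton_schulz_deriv Y (Y ** stiefel_defect Y) = -(3/2) *\<^sub>R (Y ** (stiefel_defect Y ** stiefel_defect Y))"
proof -
  define E where "E = stiefel_defect Y"
  have T: "transpose Y ** Y = E + mat 1" by (simp add: E_def gram_eq_defect)
  have S: "transpose E = E" by (simp add: E_def transpose_stiefel_defect)
  have coeff: "a - (1/2) *\<^sub>R b - (1/2) *\<^sub>R (b + a + (b + a)) = -(3/2) *\<^sub>R b" for a b :: "real^'p^'n"
    by (simp add: algebra_simps flip: scaleR_2) (simp add: scaleR_add_left[of 1 "1/2", simplified])
  have "newton_schulz_deriv Y (Y ** E) = (Y ** E) ** (mat 1 - (1/2) *\<^sub>R E)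
     - (1/2) *\<^sub>R (Y ** ((transpose E ** transpose Y) ** Y + (transpose Y ** Y) ** E))"
    by (simp add: newton_schulz_deriv_def Acal_eq_defect E_def matrix_transpose_mul matrix_mul_assoc)
  also have "\<dots> = (Y ** E) ** (mat 1 - (1/2) *\<^sub>R E)
     - (1/2) *\<^sub>R (Y ** (E ** (E + mat 1) + (E + mat 1) ** E))"
    by (simp add: T S flip: matrix_mul_assoc)
  also have "\<dots> = Y ** E - (1/2) *\<^sub>R (Y ** E ** E)
     - (1/2) *\<^sub>R (Y ** E ** E + Y ** E + (Y ** E ** E + Y ** E))"
    by (simp only: matrix_mult_simps matrix_mul_lid matrix_mul_rid)
  also have "\<dots> = -(3/2) *\<^sub>R (Y ** (E ** E))"
    using coeff[of "Y ** E" "Y ** E ** E"] by (simp only: matrix_mul_assoc)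
  finally show ?thesis by (simp add: E_def)
qed

lemma gram_deriv_normal:
  "transpose Y ** (Y ** stiefel_defect Y) + transpose (Y ** stiefel_defect Y) ** Y
     = 2 *\<^sub>R (stiefel_defect Y ** stiefel_defect Y + stiefel_defect Y)"
proof -
  define E where "E = stiefel_defect Y"
  have "transpose Y ** (Y ** E) + transpose (Y ** E) ** Y
       = (transpose Y ** Y) ** E + E ** (transpose Y ** Y)"
    by (simp add: matrix_transpose_mul E_def transpose_stiefel_defect matrix_mul_assoc)
  also have "\<dots> = 2 *\<^sub>R (E ** E + E)"
    by (simp add: E_def gram_eq_defect matrix_mult_simps vec_eq_iff algebra_simps)
  finally show ?thesis by (simp add: E_def)
qed

lemma
  assumes "Z \<in> stiefel"
  shows newton_schulz_deriv_rgrad: "newton_schulz_deriv Z (rgrad f Z) = rgrad f Z"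
    and inner_egrad_rgrad: "egrad f Z \<bullet> rgrad f Z = (norm (rgrad f Z))\<^sup>2"
proof -
  have I: "transpose Z ** Z = mat 1" using assms by (simp add: stiefel_def)
  define N where "N = egrad f Z"
  define M where "M = transpose Z ** N"
  define S where "S = (1/2) *\<^sub>R (M + transpose M)"
  have R: "rgrad f Z = N - Z ** S" by (simp add: rgrad_def N_def M_def S_def symm_part_def)
  have ZR: "transpose Z ** rgrad f Z = (1/2) *\<^sub>R (M - transpose M)"
    unfolding R by (simp add: matrix_mult_simps I M_def[symmetric] S_def vec_eq_iff algebra_simps)
  then have RZ: "transpose (rgrad f Z) ** Z = (1/2) *\<^sub>R (transpose M - M)"
    by (metis matrix_transpose_mul transpose_transpose transpose_scalar transpose_diff)
  \<comment> \<open>the Riemannian gradient is tangent: Z^T R is skew-symmetric\<close>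
  show "newton_schulz_deriv Z (rgrad f Z) = rgrad f Z"
    by (simp add: newton_schulz_deriv_def Acal_eq_defect stiefel_defect_def I ZR RZ algebra_simps)
  have skew: "S \<bullet> (transpose Z ** rgrad f Z) = 0"
    using inner_transpose[of M M] inner_commute[of M "transpose M"]
    by (simp add: ZR S_def inner_add_left inner_diff_right algebra_simps)
  have "N \<bullet> rgrad f Z = (rgrad f Z + Z ** S) \<bullet> rgrad f Z" by (simp add: R)
  also have "\<dots> = (norm (rgrad f Z))\<^sup>2"
    by (simp add: inner_add_left inner_matrix_mult_left power2_norm_eq_inner skew)
  finally show "egrad f Z \<bullet> rgrad f Z = (norm (rgrad f Z))\<^sup>2" by (simp add: N_def)
qed

lemma newton_schulz_diff: "newton_schulz Y - Y = -(1/2) *\<^sub>R (Y ** stiefel_defect Y)"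
  by (simp add: newton_schulz_def Acal_eq_defect matrix_mult_simps)

lemma stiefel_defect_newton_schulz:
  "stiefel_defect (newton_schulz Y) = -(3/4) *\<^sub>R (stiefel_defect Y ** stiefel_defect Y)
     + (1/4) *\<^sub>R (stiefel_defect Y ** stiefel_defect Y ** stiefel_defect Y)"
proof -
  define E where "E = stiefel_defect Y"
  define A where "A = mat 1 - (1/2) *\<^sub>R E"
  have TA: "transpose A = A"
    by (simp add: A_def E_def matrix_mult_simps transpose_stiefel_defect)
  have "newton_schulz Y = Y ** A" by (simp add: newton_schulz_def Acal_eq_defect A_def E_def)
  then have "stiefel_defect (newton_schulz Y) = transpose A ** (transpose Y ** Y) ** A - mat 1"
    by (simp add: stiefel_defect_def matrix_transpose_mul matrix_mul_assoc)
  also have "\<dots> = A ** (transpose Y ** Y) ** A - mat 1" by (simp add: TA)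
  also have "\<dots> = -(3/4) *\<^sub>R (E ** E) + (1/4) *\<^sub>R (E ** E ** E)"
    unfolding gram_eq_defect E_def[symmetric] A_def
    by (simp only: matrix_mult_simps matrix_mul_lid matrix_mul_rid) (simp add: vec_eq_iff algebra_simps)
  finally show ?thesis by (simp add: E_def)
qed

lemma norm_matrix_mult_le_defect:
  assumes "norm (stiefel_defect Y) \<le> 1/4"
  shows "norm (Y ** M) \<le> 9/8 * norm M"
proof -
  have "(norm (Y ** M))\<^sup>2 = (norm M)\<^sup>2 + M \<bullet> (stiefel_defect Y ** M)"
    by (simp add: power2_norm_eq_inner inner_matrix_mult_left gram_eq_defect
        matrix_mult_simps inner_add_right)
  moreover have "M \<bullet> (stiefel_defect Y ** M) \<le> norm M * norm (stiefel_defect Y ** M)"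
    by (rule norm_cauchy_schwarz)
  moreover have "norm (stiefel_defect Y ** M) \<le> 1/4 * norm M"
    using norm_matrix_mult_le[of "stiefel_defect Y" M] mult_right_mono[OF assms norm_ge_zero[of M]]
    by linarith
  then have "norm M * norm (stiefel_defect Y ** M) \<le> norm M * (1/4 * norm M)"
    by (rule mult_left_mono) simp
  moreover have "norm M * (1/4 * norm M) = 1/4 * (norm M)\<^sup>2" by (simp add: power2_eq_square)
  moreover have "(9/8 * norm M)\<^sup>2 = 81/64 * (norm M)\<^sup>2" by (simp add: power2_eq_square)
  ultimately have "(norm (Y ** M))\<^sup>2 \<le> (9/8 * norm M)\<^sup>2"
    using zero_le_power2[of "norm M"] by linarith
  then show ?thesis by (rule power2_le_imp_le) simp
qed

lemma norm_defect_newton_schulz_le: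
  assumes "norm (stiefel_defect Y) \<le> 1"
  shows "norm (stiefel_defect (newton_schulz Y)) \<le> (norm (stiefel_defect Y))\<^sup>2"
proof -
  define E where "E = stiefel_defect Y"
  define e where "e = norm E"
  have E2: "norm (E ** E) \<le> e\<^sup>2"
    using norm_matrix_mult_le[of E E] by (simp add: e_def power2_eq_square)
  have E3: "norm (E ** E ** E) \<le> e\<^sup>2 * e"
    using norm_matrix_mult_le[of "E ** E" E] mult_right_mono[OF E2, of e] by (simp add: e_def)
  have "e\<^sup>2 * e \<le> e\<^sup>2"
    using assms mult_left_mono[of e 1 "e\<^sup>2"] by (simp add: e_def E_def)
  moreover have "norm (stiefel_defect (newton_schulz Y)) \<le> 3/4 * norm (E ** E) + 1/4 * norm (E ** E ** E)"
    unfolding stiefel_defect_newton_schulz E_def[symmetric]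
    by (rule order_trans[OF norm_triangle_ineq]) simp
  ultimately show ?thesis using E2 E3 by (simp add: e_def E_def)
qed

lemma norm_newton_schulz_diff_le:
  assumes "norm (stiefel_defect Y) \<le> 1/4"
  shows "norm (newton_schulz Y - Y) \<le> 9/16 * norm (stiefel_defect Y)"
  using norm_matrix_mult_le_defect[OF assms, of "stiefel_defect Y"] by (simp add: newton_schulz_diff)

lemma norm_defect_newton_schulz_iter:
  assumes e: "norm (stiefel_defect Y) \<le> 1/4"
  shows "norm (stiefel_defect ((newton_schulz ^^ Suc k) Y)) \<le> (norm (stiefel_defect Y))\<^sup>2 * (1/2)^k"
proof (induction k)
  case 0
  then show ?case using norm_defect_newton_schulz_le[of Y] e by simp
next
  case (Suc k)
  define a where "a = norm (stiefel_defect ((newton_schulz ^^ Suc k) Y))"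
  have "(norm (stiefel_defect Y))\<^sup>2 \<le> (1/4)\<^sup>2"
    using e by (intro power_mono) auto
  moreover have "(norm (stiefel_defect Y))\<^sup>2 * (1/2)^k \<le> (norm (stiefel_defect Y))\<^sup>2"
    by (intro mult_left_le) (auto simp: power_le_one)
  ultimately have a_le: "a \<le> 1/2" using Suc.IH by (simp add: a_def power2_eq_square)
  have "norm (stiefel_defect ((newton_schulz ^^ Suc (Suc k)) Y)) \<le> a\<^sup>2"
    using norm_defect_newton_schulz_le[of "(newton_schulz ^^ Suc k) Y"] a_le by (simp add: a_def)
  also have "a\<^sup>2 \<le> a * (1/2)"
    using mult_left_mono[OF a_le, of a] by (simp add: a_def power2_eq_square)
  also have "\<dots> \<le> (norm (stiefel_defect Y))\<^sup>2 * (1/2)^(Suc k)"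
    using Suc.IH by (simp add: a_def)
  finally show ?case .
qed

lemma newton_schulz_iter_limit:
  fixes Y :: "real^'p^'n"
  assumes e: "norm (stiefel_defect Y) \<le> 1/4"
  obtains Z where "(\<lambda>k. (newton_schulz ^^ Suc k) Y) \<longlonglongrightarrow> Z"
    and "norm (newton_schulz Y - Z) \<le> 2 * (norm (stiefel_defect Y))\<^sup>2"
proof -
  define c where "c = (norm (stiefel_defect Y))\<^sup>2"
  define s where "s k = (newton_schulz ^^ Suc (Suc k)) Y - (newton_schulz ^^ Suc k) Y" for k
  have defect_le: "norm (stiefel_defect ((newton_schulz ^^ Suc k) Y)) \<le> c * (1/2)^k" for k
    using norm_defect_newton_schulz_iter[OF e] by (simp add: c_def)
  have s_le: "norm (s k) \<le> c * (1/2)^k" for k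
  proof -
    have "c * (1/2)^k \<le> c" by (intro mult_left_le) (auto simp: c_def power_le_one)
    moreover have "c \<le> 1/4" using mult_mono[OF e e] by (simp add: c_def power2_eq_square)
    ultimately have "norm (stiefel_defect ((newton_schulz ^^ Suc k) Y)) \<le> 1/4"
      using defect_le[of k] by linarith
    from norm_newton_schulz_diff_le[OF this] show ?thesis
      using defect_le[of k] norm_ge_zero[of "stiefel_defect ((newton_schulz ^^ Suc k) Y)"]
      unfolding s_def funpow.simps(2) o_apply by linarith
  qed
  have geom: "summable (\<lambda>k. c * (1/2::real)^k)" by (intro summable_mult summable_geometric) simp
  have s_summable: "summable s" by (rule summable_comparison_test'[OF geom s_le])
  have telescope: "(newton_schulz ^^ Suc k) Y = newton_schulz Y + (\<Sum>i<k. s i)" for k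
    using sum_lessThan_telescope[of "\<lambda>i. (newton_schulz ^^ Suc i) Y" k]
    by (simp add: s_def del: funpow.simps) simp
  show ?thesis
  proof
    show "(\<lambda>k. (newton_schulz ^^ Suc k) Y) \<longlonglongrightarrow> newton_schulz Y + suminf s"
      unfolding telescope by (intro tendsto_add tendsto_const summable_LIMSEQ s_summable)
    have "norm (suminf s) \<le> (\<Sum>k. c * (1/2)^k)" by (rule norm_suminf_le[OF s_le geom])
    also have "\<dots> = 2 * c" by (simp add: suminf_mult suminf_geometric)
    finally show "norm (newton_schulz Y - (newton_schulz Y + suminf s)) \<le> 2 * (norm (stiefel_defect Y))\<^sup>2"
      by (simp add: c_def)
  qed
qed

lemma exists_stiefel_near:
  fixes Y :: "real^'p^'n"
  assumes e: "norm (stiefel_defect Y) \<le> 1/4"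
  obtains Z where "Z \<in> stiefel" and "norm (Y - Z) \<le> 2 * norm (stiefel_defect Y)"
    and "norm (newton_schulz Y - Z) \<le> 2 * (norm (stiefel_defect Y))\<^sup>2"
proof -
  obtain Z where lim: "(\<lambda>k. (newton_schulz ^^ Suc k) Y) \<longlonglongrightarrow> Z"
    and near: "norm (newton_schulz Y - Z) \<le> 2 * (norm (stiefel_defect Y))\<^sup>2"
    using newton_schulz_iter_limit[OF e] by blast
  have "(\<lambda>k. stiefel_defect ((newton_schulz ^^ Suc k) Y)) \<longlonglongrightarrow> stiefel_defect Z"
    by (rule isCont_tendsto_compose[OF continuous_stiefel_defect lim])
  moreover have "(\<lambda>k. stiefel_defect ((newton_schulz ^^ Suc k) Y)) \<longlonglongrightarrow> 0"
  proof (rule tendsto_norm_zero_cancel, rule Lim_null_comparison)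
    show "\<forall>\<^sub>F k in sequentially. norm (norm (stiefel_defect ((newton_schulz ^^ Suc k) Y)))
        \<le> (norm (stiefel_defect Y))\<^sup>2 * (1/2)^k"
      using norm_defect_newton_schulz_iter[OF e] by simp
    show "(\<lambda>k. (norm (stiefel_defect Y))\<^sup>2 * (1/2::real)^k) \<longlonglongrightarrow> 0"
      by (intro tendsto_mult_right_zero LIMSEQ_power_zero) simp
  qed
  ultimately have "Z \<in> stiefel" by (simp add: stiefel_iff_defect LIMSEQ_unique)
  moreover have "norm (Y - Z) \<le> 2 * norm (stiefel_defect Y)"
  proof -
    have "norm (Y - newton_schulz Y) \<le> 9/16 * norm (stiefel_defect Y)"
      using norm_newton_schulz_diff_le[OF e] by (simp add: norm_minus_commute)
    note norm_diff_triangle_le[OF this near]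
    moreover have "(norm (stiefel_defect Y))\<^sup>2 \<le> 1/4 * norm (stiefel_defect Y)"
      using mult_right_mono[OF e norm_ge_zero] by (simp add: power2_eq_square)
    ultimately show ?thesis
      using norm_ge_zero[of "stiefel_defect Y"] by linarith
  qed
  ultimately show ?thesis using near that by blast
qed

lemma newton_schulz_deriv_expand:
  "newton_schulz_deriv Y H = (3/2) *\<^sub>R H
     - (1/2) *\<^sub>R (H ** (transpose Y ** Y) + Y ** transpose H ** Y + Y ** transpose Y ** H)"
  unfolding newton_schulz_deriv_def Acal_def
  by (simp only: matrix_mult_simps matrix_mul_lid matrix_mul_rid) (simp add: vec_eq_iff algebra_simps)

lemma norm_add3_le: "norm (a + b + c) \<le> norm a + norm b + norm (c::'a::real_normed_vector)"
  by (meson add_right_mono norm_triangle_ineq order_trans)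

lemma norm_newton_schulz_deriv_le:
  "norm (newton_schulz_deriv Y H) \<le> (3/2 + 3/2 * (norm Y)\<^sup>2) * norm H"
proof -
  define S where "S = H ** (transpose Y ** Y) + Y ** transpose H ** Y + Y ** transpose Y ** H"
  have S: "norm S \<le> 3 * ((norm Y)\<^sup>2 * norm H)"
    using norm_matrix_mult3_le[of H "transpose Y" Y] norm_matrix_mult3_le[of Y "transpose H" Y]
      norm_matrix_mult3_le[of Y "transpose Y" H]
      norm_add3_le[of "H ** transpose Y ** Y" "Y ** transpose H ** Y" "Y ** transpose Y ** H"]
    by (simp add: S_def norm_transpose matrix_mul_assoc mult_ac power2_eq_square)
  have "norm (newton_schulz_deriv Y H) \<le> norm ((3/2) *\<^sub>R H) + norm ((1/2) *\<^sub>R S)"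
    unfolding newton_schulz_deriv_expand S_def by (rule norm_triangle_ineq4)
  also have "\<dots> \<le> 3/2 * norm H + 1/2 * (3 * ((norm Y)\<^sup>2 * norm H))" using S by simp
  also have "\<dots> = (3/2 + 3/2 * (norm Y)\<^sup>2) * norm H" by (simp add: algebra_simps)
  finally show ?thesis .
qed

lemma norm_diff_bilinear_le:
  assumes "P Y Y - P Z Z = P Y (Y - Z) + P (Y - Z) Z"
    and "\<And>U V. norm (P U V) \<le> c * norm U * norm V"
  shows "norm (P Y Y - P Z Z) \<le> c * (norm Y + norm Z) * norm (Y - Z)"
proof -
  have "norm (P Y Y - P Z Z) \<le> c * norm Y * norm (Y - Z) + c * norm (Y - Z) * norm Z"
    unfolding assms(1) by (rule norm_triangle_le[OF add_mono[OF assms(2) assms(2)]])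
  then show ?thesis by (simp add: algebra_simps)
qed

lemma norm_newton_schulz_deriv_diff_le:
  fixes Y Z H :: "real^'p^'n"
  shows "norm (newton_schulz_deriv Y H - newton_schulz_deriv Z H)
    \<le> 3/2 * norm H * (norm Y + norm Z) * norm (Y - Z)"
proof -
  define P1 where "P1 U V = H ** (transpose U ** V)" for U V :: "real^'p^'n"
  define P2 where "P2 U V = U ** transpose H ** V" for U V :: "real^'p^'n"
  define P3 where "P3 U V = U ** transpose V ** H" for U V :: "real^'p^'n"
  have "norm (P1 Y Y - P1 Z Z) \<le> norm H * (norm Y + norm Z) * norm (Y - Z)"
    by (rule norm_diff_bilinear_le) (auto simp: P1_def matrix_mult_simps norm_transpose
        intro: order_trans[OF norm_matrix_mult3_le[of H "transpose U" V for U V, simplified matrix_mul_assoc]])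
  moreover have "norm (P2 Y Y - P2 Z Z) \<le> norm H * (norm Y + norm Z) * norm (Y - Z)"
    by (rule norm_diff_bilinear_le) (auto simp: P2_def matrix_mult_simps norm_transpose mult_ac
        intro: order_trans[OF norm_matrix_mult3_le])
  moreover have "norm (P3 Y Y - P3 Z Z) \<le> norm H * (norm Y + norm Z) * norm (Y - Z)"
    by (rule norm_diff_bilinear_le) (auto simp: P3_def matrix_mult_simps norm_transpose mult_ac
        intro: order_trans[OF norm_matrix_mult3_le])
  moreover have "newton_schulz_deriv Y H - newton_schulz_deriv Z H
      = -(1/2) *\<^sub>R ((P1 Y Y - P1 Z Z) + (P2 Y Y - P2 Z Z) + (P3 Y Y - P3 Z Z))"
    unfolding newton_schulz_deriv_expand P1_def P2_def P3_def by (simp add: algebra_simps)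
  ultimately show ?thesis
    using norm_add3_le[of "P1 Y Y - P1 Z Z" "P2 Y Y - P2 Z Z" "P3 Y Y - P3 Z Z"] by simp
qed

section \<open>The gradient of h controls infeasibility and the Riemannian gradient\<close>

lemma inner_egrad_hfun_normal:
  assumes "\<forall>Z. f differentiable (at Z)"
  shows "egrad (hfun f \<beta>) Y \<bullet> (Y ** stiefel_defect Y)
    = -(3/2) * (egrad f (newton_schulz Y) \<bullet> (Y ** (stiefel_defect Y ** stiefel_defect Y)))
      + \<beta> * (stiefel_defect Y \<bullet> (stiefel_defect Y ** stiefel_defect Y) + (norm (stiefel_defect Y))\<^sup>2)"
  using inner_egrad_hfun[OF assms, of \<beta> Y "Y ** stiefel_defect Y"]
  by (simp add: newton_schulz_deriv_normal gram_deriv_normal inner_add_right power2_norm_eq_inner)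

lemma norm_defect_le_egrad_hfun:
  assumes fdiff: "\<forall>Z. f differentiable (at Z)"
    and e: "norm (stiefel_defect Y) \<le> 1/4"
    and G: "norm (egrad f (newton_schulz Y)) \<le> \<beta> / 12" and \<beta>: "1 \<le> \<beta>"
  shows "norm (stiefel_defect Y) \<le> 4 * norm (egrad (hfun f \<beta>) Y)"
proof -
  define E where "E = stiefel_defect Y"
  define e where "e = norm E"
  define gh where "gh = egrad (hfun f \<beta>) Y"
  have e1: "e \<le> 1/4" using e by (simp add: e_def E_def)
  have EE: "norm (E ** E) \<le> e\<^sup>2"
    using norm_matrix_mult_le[of E E] by (simp add: e_def power2_eq_square)
  have "\<bar>egrad f (newton_schulz Y) \<bullet> (Y ** (E ** E))\<bar> \<le> \<beta> / 12 * (9/8 * e\<^sup>2)"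
  proof -
    have "norm (Y ** (E ** E)) \<le> 9/8 * e\<^sup>2"
      using norm_matrix_mult_le_defect[OF e, of "E ** E"] EE by (simp add: E_def)
    then have "norm (egrad f (newton_schulz Y)) * norm (Y ** (E ** E)) \<le> \<beta> / 12 * (9/8 * e\<^sup>2)"
      using \<beta> by (intro mult_mono[OF G]) auto
    then show ?thesis
      using Cauchy_Schwarz_ineq2[of "egrad f (newton_schulz Y)" "Y ** (E ** E)"] by linarith
  qed
  moreover have "- (1/4 * (\<beta> * e\<^sup>2)) \<le> \<beta> * (E \<bullet> (E ** E))"
  proof -
    have "\<bar>E \<bullet> (E ** E)\<bar> \<le> e * norm (E ** E)"
      using Cauchy_Schwarz_ineq2 by (simp add: e_def)
    also have "\<dots> \<le> 1/4 * e\<^sup>2" by (rule mult_mono[OF e1 EE]) auto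
    finally have "\<bar>E \<bullet> (E ** E)\<bar> \<le> 1/4 * e\<^sup>2" .
    then show ?thesis using \<beta> mult_left_mono[of "- (1/4 * e\<^sup>2)" "E \<bullet> (E ** E)" \<beta>] by simp
  qed
  moreover have "e\<^sup>2 \<le> \<beta> * e\<^sup>2" using mult_right_mono[OF \<beta>, of "e\<^sup>2"] by simp
  moreover have "gh \<bullet> (Y ** E) = -(3/2) * (egrad f (newton_schulz Y) \<bullet> (Y ** (E ** E)))
      + \<beta> * (E \<bullet> (E ** E)) + \<beta> * e\<^sup>2"
    unfolding gh_def E_def e_def inner_egrad_hfun_normal[OF fdiff] by (simp add: distrib_left)
  ultimately have "e\<^sup>2 / 2 \<le> gh \<bullet> (Y ** E)" by (simp add: abs_le_iff)
  also have "\<dots> \<le> norm gh * (9/8 * e)"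
    using order_trans[OF norm_cauchy_schwarz mult_left_mono[OF norm_matrix_mult_le_defect[OF e]]]
    by (simp add: E_def e_def)
  finally have "e * (e / 2) \<le> e * (9/8 * norm gh)"
    by (simp add: power2_eq_square mult_ac)
  then have "e / 2 \<le> 9/8 * norm gh"
    using norm_ge_zero[of gh] by (cases "e = 0") (auto simp: e_def mult_le_cancel_left)
  then show ?thesis using norm_ge_zero[of gh] unfolding e_def E_def gh_def by linarith
qed

lemma norm_le_of_inner_ge:
  fixes g r :: "'a::real_inner"
  assumes "(norm r)\<^sup>2 - c * norm r \<le> g \<bullet> r" and "0 \<le> c"
  shows "norm r \<le> norm g + c"
proof (cases "r = 0")
  case False
  have "norm r * norm r \<le> norm r * (norm g + c)"
    using assms(1) norm_cauchy_schwarz[of g r] by (simp add: power2_eq_square algebra_simps)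
  then show ?thesis using False by (simp add: mult_le_cancel_left)
qed (use assms in simp)

lemma inner_egrad_hfun_rgrad_eq:
  fixes Y Z :: "real^'p^'n"
  assumes fdiff: "\<forall>Z. f differentiable (at Z)" and Z: "Z \<in> stiefel"
  shows "egrad (hfun f \<beta>) Y \<bullet> rgrad f Z = (norm (rgrad f Z))\<^sup>2
      + (egrad f (newton_schulz Y) - egrad f Z) \<bullet> newton_schulz_deriv Y (rgrad f Z)
      + egrad f Z \<bullet> (newton_schulz_deriv Y (rgrad f Z) - newton_schulz_deriv Z (rgrad f Z))
      + \<beta> / 2 * (stiefel_defect Y \<bullet> (transpose Y ** rgrad f Z + transpose (rgrad f Z) ** Y))"
proof -
  have "egrad f Z \<bullet> newton_schulz_deriv Z (rgrad f Z) = (norm (rgrad f Z))\<^sup>2"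
    using newton_schulz_deriv_rgrad[OF Z] inner_egrad_rgrad[OF Z] by simp
  then show ?thesis
    unfolding inner_egrad_hfun[OF fdiff] by (simp add: inner_diff_left inner_diff_right)
qed

lemma inner_egrad_hfun_rgrad_ge:
  fixes Y Z :: "real^'p^'n"
  assumes fdiff: "\<forall>Z. f differentiable (at Z)" and Z: "Z \<in> stiefel" and \<beta>: "0 \<le> \<beta>"
    and lip: "norm (egrad f (newton_schulz Y) - egrad f Z) \<le> L * norm (stiefel_defect Y)"
    and YZ: "norm (Y - Z) \<le> 2 * norm (stiefel_defect Y)"
    and nY: "norm Y \<le> K" and nZ: "norm Z \<le> K" and nN: "norm (egrad f Z) \<le> KG"
  shows "(norm (rgrad f Z))\<^sup>2 - (L * (3/2 + 3/2 * K\<^sup>2) + 6 * KG * K + \<beta> * K)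
      * norm (stiefel_defect Y) * norm (rgrad f Z) \<le> egrad (hfun f \<beta>) Y \<bullet> rgrad f Z"
proof -
  define e where "e = norm (stiefel_defect Y)"
  define R where "R = rgrad f Z"
  define N where "N = egrad f Z"
  define D where "D W = newton_schulz_deriv W R" for W :: "real^'p^'n"
  have K: "0 \<le> K" using nY norm_ge_zero[of Y] by linarith
  have KG: "0 \<le> KG" using nN norm_ge_zero[of "egrad f Z"] by linarith
  have KD: "3/2 + 3/2 * (norm Y)\<^sup>2 \<le> 3/2 + 3/2 * K\<^sup>2"
    using power_mono[OF nY norm_ge_zero, of 2] by simp
  have Le: "0 \<le> L * e" using order_trans[OF norm_ge_zero lip] by (simp add: e_def)
  have "\<bar>(egrad f (newton_schulz Y) - N) \<bullet> D Y\<bar> \<le> (L * e) * ((3/2 + 3/2 * K\<^sup>2) * norm R)"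
  proof -
    have "norm (D Y) \<le> (3/2 + 3/2 * K\<^sup>2) * norm R"
      using norm_newton_schulz_deriv_le[of Y R] mult_right_mono[OF KD norm_ge_zero[of R]]
      by (simp add: D_def)
    then show ?thesis
      using order_trans[OF Cauchy_Schwarz_ineq2 mult_mono[OF lip]] Le by (simp add: N_def e_def)
  qed
  moreover have "\<bar>N \<bullet> (D Y - D Z)\<bar> \<le> KG * (3/2 * norm R * (2 * K) * (2 * e))"
  proof -
    have YZ_le: "3/2 * norm R * (norm Y + norm Z) \<le> 3/2 * norm R * (2 * K)"
      using nY nZ by (intro mult_left_mono) auto
    have "norm (D Y - D Z) \<le> 3/2 * norm R * (norm Y + norm Z) * norm (Y - Z)"
      unfolding D_def by (rule norm_newton_schulz_deriv_diff_le)
    also have "\<dots> \<le> 3/2 * norm R * (2 * K) * (2 * e)"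
      by (rule mult_mono[OF YZ_le YZ[folded e_def]]) (use K in auto)
    finally have DYZ: "norm (D Y - D Z) \<le> 3/2 * norm R * (2 * K) * (2 * e)" .
    show ?thesis
      using order_trans[OF Cauchy_Schwarz_ineq2 mult_mono[OF nN DYZ]] KG by (simp add: N_def)
  qed
  moreover have "\<bar>\<beta> / 2 * (stiefel_defect Y \<bullet> (transpose Y ** R + transpose R ** Y))\<bar>
      \<le> \<beta> / 2 * (e * (2 * K * norm R))"
  proof -
    have "norm (transpose Y ** R + transpose R ** Y) \<le> 2 * K * norm R"
      using norm_gram_deriv_le[of Y R] mult_right_mono[OF nY norm_ge_zero[of R]] by simp
    then have "\<bar>stiefel_defect Y \<bullet> (transpose Y ** R + transpose R ** Y)\<bar> \<le> e * (2 * K * norm R)"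
      using order_trans[OF Cauchy_Schwarz_ineq2 mult_left_mono] by (simp add: e_def)
    then have "\<beta> / 2 * \<bar>stiefel_defect Y \<bullet> (transpose Y ** R + transpose R ** Y)\<bar>
        \<le> \<beta> / 2 * (e * (2 * K * norm R))"
      by (rule mult_left_mono) (use \<beta> in simp)
    then show ?thesis using \<beta> by (simp add: abs_mult)
  qed
  ultimately show ?thesis
    unfolding inner_egrad_hfun_rgrad_eq[OF fdiff Z]
    unfolding R_def[symmetric] N_def[symmetric] D_def[symmetric] e_def[symmetric]
    by (simp add: abs_le_iff algebra_simps)
qed

lemma norm_rgrad_le_egrad_hfun:
  fixes Y Z :: "real^'p^'n"
  assumes "\<forall>Z. f differentiable (at Z)" and "Z \<in> stiefel" and "0 \<le> \<beta>" and "0 \<le> L"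
    and "norm (egrad f (newton_schulz Y) - egrad f Z) \<le> L * norm (stiefel_defect Y)"
    and "norm (Y - Z) \<le> 2 * norm (stiefel_defect Y)"
    and "norm Y \<le> K" and "norm Z \<le> K" and "norm (egrad f Z) \<le> KG"
  shows "norm (rgrad f Z) \<le> norm (egrad (hfun f \<beta>) Y)
      + (L * (3/2 + 3/2 * K\<^sup>2) + 6 * KG * K + \<beta> * K) * norm (stiefel_defect Y)"
proof (rule norm_le_of_inner_ge)
  show "(norm (rgrad f Z))\<^sup>2 - (L * (3/2 + 3/2 * K\<^sup>2) + 6 * KG * K + \<beta> * K) * norm (stiefel_defect Y)
      * norm (rgrad f Z) \<le> egrad (hfun f \<beta>) Y \<bullet> rgrad f Z"
    using inner_egrad_hfun_rgrad_ge[OF assms(1-3,5-)] by (simp add: mult_ac)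
  have "0 \<le> K" "0 \<le> KG" using assms(7,9) norm_ge_zero[of Y] norm_ge_zero[of "egrad f Z"] by linarith+
  then show "0 \<le> (L * (3/2 + 3/2 * K\<^sup>2) + 6 * KG * K + \<beta> * K) * norm (stiefel_defect Y)"
    using assms(3,4) by simp
qed

section \<open>Transfer of the Lojasiewicz inequality\<close>

lemma locally_lipschitz_ballE:
  assumes "locally_lipschitz F"
  obtains r L where "0 < r" and "L-lipschitz_on (ball x r) F"
proof -
  obtain r L where "0 < r" and L: "\<forall>y\<in>ball x r. \<forall>z\<in>ball x r. dist (F y) (F z) \<le> L * dist y z"
    using assms unfolding locally_lipschitz_def by blast
  moreover have "\<bar>L\<bar>-lipschitz_on (ball x r) F"
  proof (rule lipschitz_onI)
    fix y z assume "y \<in> ball x r" "z \<in> ball x r"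
    then have "dist (F y) (F z) \<le> L * dist y z" using L by blast
    also have "\<dots> \<le> \<bar>L\<bar> * dist y z" by (rule mult_right_mono) auto
    finally show "dist (F y) (F z) \<le> \<bar>L\<bar> * dist y z" .
  qed simp
  ultimately show ?thesis using that by blast
qed

lemma isCont_locally_lipschitz: "locally_lipschitz F \<Longrightarrow> isCont F x"
  by (metis locally_lipschitz_ballE lipschitz_on_continuous_on continuous_on_interior
      interior_ball centre_in_ball)

lemma common_lipschitz_ball:
  assumes "locally_lipschitz F" and "locally_lipschitz G" and "open U" and "x \<in> U"
  obtains r L M where "0 < r" and "r \<le> 1" and "ball x r \<subseteq> U"
    and "L-lipschitz_on (ball x r) F" and "M-lipschitz_on (ball x r) G"
proof -
  obtain r1 L where "0 < r1" and L: "L-lipschitz_on (ball x r1) F"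
    using locally_lipschitz_ballE[OF assms(1)] by blast
  moreover obtain r2 M where "0 < r2" and M: "M-lipschitz_on (ball x r2) G"
    using locally_lipschitz_ballE[OF assms(2)] by blast
  moreover obtain r3 where "0 < r3" and "ball x r3 \<subseteq> U"
    using assms(3,4) open_contains_ball by blast
  moreover define r where "r = min (min r1 r2) (min r3 1)"
  ultimately have "0 < r" "r \<le> 1" "ball x r \<subseteq> U" "ball x r \<subseteq> ball x r1" "ball x r \<subseteq> ball x r2"
    by auto
  then show ?thesis
    using that lipschitz_on_subset[OF L] lipschitz_on_subset[OF M] by blast
qed

lemma stiefel_isometry:
  assumes "Y \<in> stiefel"
  shows "norm (Y *v v) = norm (v::real^'p)"
proof -
  have "(Y *v v) \<bullet> (Y *v v) = v \<bullet> (transpose Y *v (Y *v v))"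
    by (metis dot_lmul_matrix vector_transpose_matrix)
  also have "\<dots> = v \<bullet> v" using assms by (simp add: matrix_vector_mul_assoc stiefel_def)
  finally show ?thesis by (simp add: norm_eq_sqrt_inner)
qed

lemma stiefel_subset_Omega: "stiefel \<subseteq> (Omega :: (real^'p^'n) set)"
proof
  fix Y :: "real^'p^'n" assume "Y \<in> stiefel"
  then have "onorm ((*v) Y) \<le> 1"
    by (intro onorm_le) (simp add: stiefel_isometry)
  then show "Y \<in> Omega" by (simp add: Omega_def)
qed

lemma norm_le_Omega:
  assumes "X \<in> (Omega :: (real^'p^'n) set)"
  shows "norm X \<le> 2 * real (CARD('n) * CARD('p))"
proof -
  define N where "N = real (CARD('n) * CARD('p))"
  have "1 \<le> CARD('n) * CARD('p)" by (simp add: Suc_le_eq)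
  then have N1: "1 \<le> N" unfolding N_def by (metis of_nat_1 of_nat_le_iff)
  have entry: "(X$i$j)\<^sup>2 \<le> (13/12)\<^sup>2" for i j
  proof -
    have "\<bar>X$i$j\<bar> \<le> onorm ((*v) X)" by (rule matrix_component_le_onorm)
    also have "\<dots> \<le> 13/12" using assms by (simp add: Omega_def)
    finally show ?thesis by (simp add: abs_le_square_iff[symmetric])
  qed
  have "(norm X)\<^sup>2 \<le> (\<Sum>i\<in>(UNIV::'n set). \<Sum>j\<in>(UNIV::'p set). (13/12::real)\<^sup>2)"
    unfolding norm_matrix_sq by (intro sum_mono entry)
  also have "\<dots> = N * (169/144)" by (simp add: N_def power2_eq_square)
  also have "\<dots> \<le> (2 * N)\<^sup>2" using N1 by (simp add: power2_eq_square)
  finally show ?thesis unfolding N_def[symmetric] by (rule power2_le_imp_le) (use N1 in simp)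
qed

lemma norm_egrad_le_M1:
  fixes f :: "real^'p^'n \<Rightarrow> real"
  assumes "locally_lipschitz (egrad f)" and "X \<in> stiefel"
  shows "norm (egrad f X) \<le> M1 f"
proof -
  define B where "B = 2 * real (CARD('n) * CARD('p))"
  have "continuous_on (cball 0 B) (\<lambda>X::real^'p^'n. norm (Gfun f X))"
    unfolding Gfun_def newton_schulz_def[symmetric]
    by (intro continuous_at_imp_continuous_on ballI continuous_intros
        isCont_o2[OF continuous_newton_schulz isCont_locally_lipschitz[OF assms(1)]])
  then have "bdd_above ((\<lambda>X::real^'p^'n. norm (Gfun f X)) ` cball 0 B)"
    by (intro bounded_imp_bdd_above compact_imp_bounded compact_continuous_image compact_cball)
  moreover have "(Omega :: (real^'p^'n) set) \<subseteq> cball 0 B"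
    using norm_le_Omega by (auto simp: B_def)
  \<comment> \<open>without this bound the SUP defining M1 would be a junk value\<close>
  ultimately have "bdd_above ((\<lambda>X::real^'p^'n. norm (Gfun f X)) ` Omega)"
    by (meson bdd_above_mono image_mono)
  then have "norm (Gfun f X) \<le> M1 f"
    unfolding M1_def using stiefel_subset_Omega assms(2) by (intro cSUP_upper) auto
  then show ?thesis
    using assms(2) by (simp add: Gfun_def newton_schulz_def[symmetric] newton_schulz_stiefel)
qed

lemma powr_add_le:
  fixes a b q :: real
  assumes "0 \<le> a" and "0 \<le> b" and "0 < q" and "q \<le> 1"
  shows "(a + b) powr q \<le> a powr q + b powr q"
proof (cases "a + b = 0")
  case False
  define s where "s = a + b"
  have s: "0 < s" using False assms by (simp add: s_def)
  have weighted: "x * s powr (q - 1) \<le> x powr q" if "0 \<le> x" "x \<le> s" for x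
  proof (cases "x = 0")
    case False
    then have "s powr (q - 1) \<le> x powr (q - 1)"
      using assms that by (intro powr_mono2') auto
    moreover have "x powr q = x * x powr (q - 1)"
      using False that powr_add[of x 1 "q - 1"] by simp
    ultimately show ?thesis using that by (simp add: mult_left_mono)
  qed simp
  have "s powr q = a * s powr (q - 1) + b * s powr (q - 1)"
    using s powr_add[of s 1 "q - 1"] by (simp add: s_def algebra_simps)
  also have "\<dots> \<le> a powr q + b powr q"
    using weighted[of a] weighted[of b] assms by (simp add: s_def add_mono)
  finally show ?thesis by (simp add: s_def)
qed (use assms in simp)

lemma powr_power2_le:
  fixes e q :: real
  assumes "0 \<le> e" and "e \<le> 1" and "1/2 \<le> q"
  shows "(e\<^sup>2) powr q \<le> e"
proof (cases "e = 0")
  case False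
  have "(e\<^sup>2) powr q = e powr (2 * q)"
    using assms powr_powr[of e 2 q] by simp
  also have "\<dots> \<le> e powr 1" by (rule powr_mono') (use assms in auto)
  finally show ?thesis using assms by simp
qed simp

lemma abs_hfun_diff_powr_le:
  assumes X: "X \<in> stiefel" and e: "norm (stiefel_defect Y) \<le> 1"
    and lip: "\<bar>f (newton_schulz Y) - f Z\<bar> \<le> L * norm (newton_schulz Y - Z)"
    and near: "norm (newton_schulz Y - Z) \<le> 2 * (norm (stiefel_defect Y))\<^sup>2"
    and L: "0 \<le> L" and \<beta>: "0 \<le> \<beta>" and q: "1/2 \<le> q" "q \<le> 1"
  shows "\<bar>hfun f \<beta> Y - hfun f \<beta> X\<bar> powr q
    \<le> (2 * L + \<beta> / 4) powr q * norm (stiefel_defect Y) + \<bar>f Z - f X\<bar> powr q"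
proof -
  define e where "e = norm (stiefel_defect Y)"
  define c where "c = 2 * L + \<beta> / 4"
  have c: "0 \<le> c" using L \<beta> by (simp add: c_def)
  have hX: "hfun f \<beta> X = f X"
    using X by (simp add: hfun_eq newton_schulz_stiefel stiefel_iff_defect)
  have hY: "hfun f \<beta> Y = f (newton_schulz Y) + \<beta> / 4 * e\<^sup>2" by (simp add: hfun_eq e_def)
  have "\<bar>f (newton_schulz Y) - f Z\<bar> \<le> L * (2 * e\<^sup>2)"
    using lip mult_left_mono[OF near L] by (simp add: e_def)
  moreover have "0 \<le> \<beta> / 4 * e\<^sup>2" using \<beta> by simp
  moreover have "c * e\<^sup>2 = L * (2 * e\<^sup>2) + \<beta> / 4 * e\<^sup>2" by (simp add: c_def algebra_simps)
  ultimately have "\<bar>hfun f \<beta> Y - hfun f \<beta> X\<bar> \<le> c * e\<^sup>2 + \<bar>f Z - f X\<bar>"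
    unfolding hX hY by (intro abs_leI) (simp_all add: abs_le_iff, linarith+)
  then have "\<bar>hfun f \<beta> Y - hfun f \<beta> X\<bar> powr q \<le> (c * e\<^sup>2 + \<bar>f Z - f X\<bar>) powr q"
    using q by (intro powr_mono2) auto
  also have "\<dots> \<le> (c * e\<^sup>2) powr q + \<bar>f Z - f X\<bar> powr q"
    using c q by (intro powr_add_le) auto
  also have "(c * e\<^sup>2) powr q \<le> c powr q * e"
    using c e q powr_power2_le[of e q] by (simp add: powr_mult e_def mult_left_mono)
  finally show ?thesis by (simp add: c_def e_def)
qed

lemma abs_hfun_diff_powr_le_egrad_hfun:
  fixes f :: "real^'p^'n \<Rightarrow> real" and X Y Z :: "real^'p^'n"
  assumes fdiff: "\<forall>Z. f differentiable (at Z)" and X: "X \<in> stiefel" and Z: "Z \<in> stiefel"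
    and q: "1/2 \<le> q" "q \<le> 1" and C: "0 < C" and \<beta>: "1 \<le> \<beta>" and L: "0 \<le> L" "0 \<le> L'"
    and e: "norm (stiefel_defect Y) \<le> 1/4" and G: "norm (egrad f (newton_schulz Y)) \<le> \<beta> / 12"
    and YZ: "norm (Y - Z) \<le> 2 * norm (stiefel_defect Y)"
    and NZ: "norm (newton_schulz Y - Z) \<le> 2 * (norm (stiefel_defect Y))\<^sup>2"
    and lip_egrad: "norm (egrad f (newton_schulz Y) - egrad f Z) \<le> L * norm (stiefel_defect Y)"
    and lip_f: "\<bar>f (newton_schulz Y) - f Z\<bar> \<le> L' * norm (newton_schulz Y - Z)"
    and norms: "norm Y \<le> K" "norm Z \<le> K" "norm (egrad f Z) \<le> KG"
    and loja: "C * \<bar>f Z - f X\<bar> powr q \<le> norm (rgrad f Z)"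
  shows "\<bar>hfun f \<beta> Y - hfun f \<beta> X\<bar> powr q \<le> (4 * (2 * L' + \<beta> / 4) powr q
    + (1 + 4 * (L * (3/2 + 3/2 * K\<^sup>2) + 6 * KG * K + \<beta> * K)) / C) * norm (egrad (hfun f \<beta>) Y)"
proof -
  define e where "e = norm (stiefel_defect Y)"
  define gh where "gh = norm (egrad (hfun f \<beta>) Y)"
  define M where "M = L * (3/2 + 3/2 * K\<^sup>2) + 6 * KG * K + \<beta> * K"
  have "0 \<le> K" "0 \<le> KG" using norms(1,3) norm_ge_zero[of Y] norm_ge_zero[of "egrad f Z"] by linarith+
  then have M: "0 \<le> M" using L \<beta> by (simp add: M_def)
  have e_le: "e \<le> 4 * gh"
    using norm_defect_le_egrad_hfun[OF fdiff e G \<beta>] by (simp add: e_def gh_def)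
  have "norm (rgrad f Z) \<le> gh + M * e"
    using norm_rgrad_le_egrad_hfun[OF fdiff Z _ L(1) lip_egrad YZ norms] \<beta> by (simp add: M_def gh_def e_def)
  then have "\<bar>f Z - f X\<bar> powr q \<le> (gh + M * e) / C"
    using loja C by (simp add: pos_le_divide_eq mult.commute)
  moreover have "\<bar>hfun f \<beta> Y - hfun f \<beta> X\<bar> powr q \<le> (2 * L' + \<beta> / 4) powr q * e + \<bar>f Z - f X\<bar> powr q"
    using abs_hfun_diff_powr_le[OF X _ lip_f NZ L(2) _ q] e \<beta> by (simp add: e_def)
  ultimately have "\<bar>hfun f \<beta> Y - hfun f \<beta> X\<bar> powr q \<le> (2 * L' + \<beta> / 4) powr q * e + (gh + M * e) / C"
    by linarith
  also have "\<dots> \<le> (2 * L' + \<beta> / 4) powr q * (4 * gh) + (gh + M * (4 * gh)) / C"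
    using e_le M C by (intro add_mono mult_left_mono divide_right_mono add_left_mono) auto
  also have "\<dots> = (4 * (2 * L' + \<beta> / 4) powr q + (1 + 4 * M) / C) * gh"
    using C by (simp add: field_simps)
  finally show ?thesis by (simp add: gh_def M_def)
qed

lemma hfun_lojasiewicz_near:
  fixes f :: "real^'p^'n \<Rightarrow> real" and X :: "real^'p^'n"
  assumes fdiff: "\<forall>Z. f differentiable (at Z)" and X: "X \<in> stiefel"
    and q: "1/2 \<le> q" "q \<le> 1" and C: "0 < C" and \<beta>: "1 \<le> \<beta>" and \<rho>: "0 < \<rho>" "\<rho> \<le> 1"
    and lip_egrad: "L-lipschitz_on (ball X \<rho>) (egrad f)" and lip_f: "L'-lipschitz_on (ball X \<rho>) f"
    and loja: "\<forall>Z\<in>ball X \<rho> \<inter> stiefel. C * \<bar>f Z - f X\<bar> powr q \<le> norm (rgrad f Z)"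
  shows "\<exists>D>0. \<forall>Y. norm (stiefel_defect Y) \<le> \<rho> / 4 \<longrightarrow> dist Y X < \<rho> / 2
    \<longrightarrow> dist (newton_schulz Y) X < \<rho> \<longrightarrow> norm (egrad f (newton_schulz Y)) \<le> \<beta> / 12
    \<longrightarrow> \<bar>hfun f \<beta> Y - hfun f \<beta> X\<bar> powr q \<le> D * norm (egrad (hfun f \<beta>) Y)"
proof -
  define K where "K = norm X + 1"
  define KG where "KG = norm (egrad f X) + L"
  define M where "M = L * (3/2 + 3/2 * K\<^sup>2) + 6 * KG * K + \<beta> * K"
  define D where "D = 4 * (2 * L' + \<beta> / 4) powr q + (1 + 4 * M) / C"
  have L: "0 \<le> L" "0 \<le> L'" using lip_egrad lip_f by (simp_all add: lipschitz_on_nonneg)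
  then have "0 \<le> M" using \<beta> by (simp add: M_def K_def KG_def)
  then have "0 < D" unfolding D_def using C by (intro add_nonneg_pos) auto
  moreover have "\<bar>hfun f \<beta> Y - hfun f \<beta> X\<bar> powr q \<le> D * norm (egrad (hfun f \<beta>) Y)"
    if e: "norm (stiefel_defect Y) \<le> \<rho> / 4" and Y: "dist Y X < \<rho> / 2"
      and NY: "dist (newton_schulz Y) X < \<rho>" and G: "norm (egrad f (newton_schulz Y)) \<le> \<beta> / 12" for Y
  proof -
    define e where "e = norm (stiefel_defect Y)"
    have e': "0 \<le> e" "e \<le> 1/4" "e \<le> \<rho> / 4" using e \<rho> by (auto simp: e_def)
    obtain Z where Z: "Z \<in> stiefel" and YZ: "norm (Y - Z) \<le> 2 * e"
      and NZ: "norm (newton_schulz Y - Z) \<le> 2 * e\<^sup>2"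
      using exists_stiefel_near[of Y] e' by (auto simp: e_def)
    have in_ball: "Y \<in> ball X \<rho>" "newton_schulz Y \<in> ball X \<rho>" "Z \<in> ball X \<rho>"
      using Y NY dist_triangle[of Z X Y] YZ e' by (auto simp: dist_commute dist_norm norm_minus_commute)
    have "2 * e\<^sup>2 \<le> e" using mult_right_mono[OF e'(2) e'(1)] e'(1) by (simp add: power2_eq_square)
    then have "norm (egrad f (newton_schulz Y) - egrad f Z) \<le> L * e"
      using lipschitz_on_normD[OF lip_egrad in_ball(2,3)] mult_left_mono[OF NZ L(1)]
        mult_left_mono[of "2 * e\<^sup>2" e L] L by linarith
    moreover have "norm Y \<le> K" "norm Z \<le> K" "norm (egrad f Z) \<le> KG"
      using in_ball \<rho> norm_triangle_sub[of Y X] norm_triangle_sub[of Z X]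
        norm_triangle_sub[of "egrad f Z" "egrad f X"] lipschitz_on_normD[OF lip_egrad in_ball(3), of X]
        mult_left_mono[of "norm (Z - X)" 1 L] L
      by (auto simp: K_def KG_def dist_norm norm_minus_commute)
    moreover have "\<bar>f (newton_schulz Y) - f Z\<bar> \<le> L' * norm (newton_schulz Y - Z)"
      using lipschitz_on_normD[OF lip_f in_ball(2,3)] by simp
    ultimately show ?thesis
      using abs_hfun_diff_powr_le_egrad_hfun[OF fdiff X Z q C \<beta> L _ G] loja in_ball(3) Z e' YZ NZ
      by (simp add: D_def M_def e_def)
  qed
  ultimately show ?thesis by blast
qed

lemma eventually_nhds_dist_lt:
  assumes "isCont F x" and "0 < r"
  shows "\<forall>\<^sub>F y in nhds x. dist (F y) (F x) < r"
  using tendstoD[OF assms(1)[unfolded isCont_def tendsto_at_iff_tendsto_nhds] assms(2)] .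

lemma eventually_near_stiefel_point:
  assumes "locally_lipschitz (egrad f)" and X: "X \<in> stiefel" and "0 < \<rho>"
    and G: "norm (egrad f X) < b"
  shows "\<forall>\<^sub>F Y in nhds X. norm (stiefel_defect Y) \<le> \<rho> / 4 \<and> dist Y X < \<rho> / 2
    \<and> dist (newton_schulz Y) X < \<rho> \<and> norm (egrad f (newton_schulz Y)) \<le> b"
proof -
  have "isCont (\<lambda>Y. norm (egrad f (newton_schulz Y))) X"
    by (intro continuous_intros isCont_o2[OF continuous_newton_schulz isCont_locally_lipschitz[OF assms(1)]])
  then have "\<forall>\<^sub>F Y in nhds X. dist (stiefel_defect Y) (stiefel_defect X) < \<rho> / 4 \<and> dist Y X < \<rho> / 2
      \<and> dist (newton_schulz Y) (newton_schulz X) < \<rho>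
      \<and> dist (norm (egrad f (newton_schulz Y))) (norm (egrad f (newton_schulz X))) < b - norm (egrad f X)"
    using assms(3) G by (intro eventually_conj eventually_nhds_dist_lt continuous_stiefel_defect
        continuous_ident continuous_newton_schulz) auto
  then show ?thesis
    by (rule eventually_mono) (use X in \<open>auto simp: newton_schulz_stiefel stiefel_iff_defect dist_real_def\<close>)
qed

theorem mainTheorem19:
  fixes f :: "real^'p^'n \<Rightarrow> real" and X :: "real^'p^'n"
    and \<theta> C \<beta> :: real
  assumes np: "CARD('p) \<le> CARD('n)"
    and fdiff: "\<forall>Y. f differentiable (at Y)"
    and flip: "locally_lipschitz f"
    and gflip: "locally_lipschitz (egrad f)"
    and X: "X \<in> stiefel"
    and theta: "0 < \<theta>" "\<theta> \<le> 1/2"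
    and C: "C > 0"
    and loja: "\<exists>U. open U \<and> X \<in> U \<and>
       (\<forall>Y\<in>U \<inter> stiefel. norm (rgrad f Y) \<ge> C * \<bar>f Y - f X\<bar> powr (1 - \<theta>))"
    and beta: "\<beta> > max (8 * C * M1 f) (max 1 (beta_bar f))"
  shows "\<exists>U'. open U' \<and> X \<in> U' \<and> (\<exists>C'>0. \<forall>Y\<in>U'.
       norm (egrad (hfun f \<beta>) Y) \<ge> C' * \<bar>hfun f \<beta> Y - hfun f \<beta> X\<bar> powr (1 - \<theta>))"
proof -
  have q: "1/2 \<le> 1 - \<theta>" "1 - \<theta> \<le> 1" using theta by auto
  have \<beta>: "1 \<le> \<beta>" and G: "norm (egrad f X) < \<beta> / 12"
    using beta norm_egrad_le_M1[OF gflip X] by (auto simp: beta_bar_def)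
  obtain U where U: "open U" "X \<in> U"
    and loja_U: "\<forall>Y\<in>U \<inter> stiefel. C * \<bar>f Y - f X\<bar> powr (1 - \<theta>) \<le> norm (rgrad f Y)"
    using loja by blast
  obtain \<rho> L L' where \<rho>: "0 < \<rho>" "\<rho> \<le> 1" "ball X \<rho> \<subseteq> U"
    and lip: "L-lipschitz_on (ball X \<rho>) (egrad f)" "L'-lipschitz_on (ball X \<rho>) f"
    using common_lipschitz_ball[OF gflip flip U] by blast
  obtain D where "0 < D" and near: "\<forall>Y. norm (stiefel_defect Y) \<le> \<rho> / 4 \<longrightarrow> dist Y X < \<rho> / 2
    \<longrightarrow> dist (newton_schulz Y) X < \<rho> \<longrightarrow> norm (egrad f (newton_schulz Y)) \<le> \<beta> / 12
    \<longrightarrow> \<bar>hfun f \<beta> Y - hfun f \<beta> X\<bar> powr (1 - \<theta>) \<le> D * norm (egrad (hfun f \<beta>) Y)"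
    using hfun_lojasiewicz_near[OF fdiff X q C \<beta> \<rho>(1,2) lip] loja_U \<rho>(3) by blast
  have "\<forall>\<^sub>F Y in nhds X. norm (stiefel_defect Y) \<le> \<rho> / 4 \<and> dist Y X < \<rho> / 2
      \<and> dist (newton_schulz Y) X < \<rho> \<and> norm (egrad f (newton_schulz Y)) \<le> \<beta> / 12"
    by (rule eventually_near_stiefel_point[OF gflip X \<rho>(1) G])
  then obtain U' where "open U'" "X \<in> U'"
    and "\<forall>Y\<in>U'. \<bar>hfun f \<beta> Y - hfun f \<beta> X\<bar> powr (1 - \<theta>) \<le> D * norm (egrad (hfun f \<beta>) Y)"
    using near unfolding eventually_nhds by blast
  then show ?thesis using \<open>0 < D\<close>
    by (intro exI[of _ U'] conjI exI[of _ "1 / D"]) (auto simp: divide_le_eq mult.commute)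
qed

end
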